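(* For each kernel $k$, there exists a constant $\lambda_T > 0$ such that when $\lambda \ge \lambda_T$, the kernel SVM prediction is $\hat y^{(k)}_{\mathrm{SVM}}(x) = \mathrm{sign}([\tau(f^* )](x))$, where $\tau$ is the operator associated with the centered kernel $\tilde k$, i.e., $[\tau(f)](x) = \mathbb{E}_{P_X}[\tilde k(X, x) f(X)]$. Moreover, $\hat y^{(k)}_{\mathrm{SVM}}(x) = \hat y^{(k)}(x)$ for all $x \in \mathcal{X}$.
   Context: Binary classification with $\mathcal{Y} = \{-1, 1\}$; $P_{X,Y}$ is the empirical distribution of training samples on a finite $\mathcal{X}$, balanced: $P_Y(-1) = P_Y(1) = 1/2$. Then $P_{X,Y}(x,y) = P_X(x)P_Y(y)(1 + \varrho f^*(x) y)$ where $\varrho$ is the HGR maximal correlation and $f^*$ the maximal correlation function with $\mathbb{E}[f^*(X)^2]=1$. For a feature $f\colon\mathcal{X}\to\mathbb{R}^d$, SVM minimizes $\mathbb{E}[(1 - Y(\langle w, f(X)\rangle + b))^+] + \frac{\lambda}{2}\|w\|^2$ over $(w, b)$ and predicts $\mathrm{sign}(\langle w_{\mathrm{SVM}}, f(x)\rangle + b_{\mathrm{SVM}})$. A kernel $k$ on $\mathcal{X}$ has a mapping $\nu$ into an inner product space with $k(x,x') = \langle \nu(x), \nu(x')\rangle$, and the kernel SVM prediction $\hat y^{(k)}_{\mathrm{SVM}}$ is the SVM prediction using feature $\nu$. The centered kernel is $\tilde k(x,x') = k(x,x') - \bar k(x) - \bar k(x') + \mathbb{E}_{P_X}[\bar k(X)]$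 with $\bar k(x) = \mathbb{E}_{P_X}[k(X,x)]$. The kernelized discriminative model is $P^{(k)}_{Y|X}(y|x) = P_Y(y)(1 + \mathbb{E}[\tilde k(X, x)\mid Y=y])$ and $\hat y^{(k)}(x) = \arg\max_y P^{(k)}_{Y|X}(y|x)$.
   Formalization: The HGR maximal correlation $\varrho$ is assumed positive, and for each $\lambda \ge \lambda_T$ the equalities with $\mathrm{sign}([\tau(f^* )](x))$ and $\hat y^{(k)}(x)$ hold for the prediction of some SVM minimizer $(w, b)$, not of every one. Each condition added here is assumed in the paper as well or is needed for the statement above to hold. *)

theory Defs
  imports "HOL-Analysis.Analysis"
begin

text \<open>Setting: finite input type 'x, labels y in {-1,1} encoded as reals.
  A joint distribution is a function PXY :: 'x => real => real, only evaluated at y in {-1,1}.\<close>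

definition labels :: "real set" where
  "labels = {-1, 1}"

definition is_joint_pmf :: "('x::finite \<Rightarrow> real \<Rightarrow> real) \<Rightarrow> bool" where
  "is_joint_pmf PXY \<longleftrightarrow> (\<forall>x. \<forall>y\<in>labels. PXY x y \<ge> 0) \<and>
     (\<Sum>x\<in>UNIV. \<Sum>y\<in>labels. PXY x y) = 1"

definition marg_X :: "('x::finite \<Rightarrow> real \<Rightarrow> real) \<Rightarrow> 'x \<Rightarrow> real" where
  "marg_X PXY x = (\<Sum>y\<in>labels. PXY x y)"

definition marg_Y :: "('x::finite \<Rightarrow> real \<Rightarrow> real) \<Rightarrow> real \<Rightarrow> real" where
  "marg_Y PXY y = (\<Sum>x\<in>UNIV. PXY x y)"

definition expXY :: "('x::finite \<Rightarrow> real \<Rightarrow> real) \<Rightarrow> ('x \<Rightarrow> real \<Rightarrow> real) \<Rightarrow> real" where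
  "expXY PXY g = (\<Sum>x\<in>UNIV. \<Sum>y\<in>labels. PXY x y * g x y)"

definition expX :: "('x::finite \<Rightarrow> real \<Rightarrow> real) \<Rightarrow> ('x \<Rightarrow> real) \<Rightarrow> real" where
  "expX PXY h = (\<Sum>x\<in>UNIV. marg_X PXY x * h x)"

definition expY :: "('x::finite \<Rightarrow> real \<Rightarrow> real) \<Rightarrow> (real \<Rightarrow> real) \<Rightarrow> real" where
  "expY PXY g = (\<Sum>y\<in>labels. marg_Y PXY y * g y)"

definition hgr :: "('x::finite \<Rightarrow> real \<Rightarrow> real) \<Rightarrow> real" where
  "hgr PXY = Sup {expXY PXY (\<lambda>x y. f x * g y) | f g.
      expX PXY f = 0 \<and> expX PXY (\<lambda>x. (f x)\<^sup>2) = 1 \<and>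
      expY PXY g = 0 \<and> expY PXY (\<lambda>y. (g y)\<^sup>2) = 1}"

definition kern :: "('x \<Rightarrow> 'v::real_inner) \<Rightarrow> 'x \<Rightarrow> 'x \<Rightarrow> real" where
  "kern \<nu> x x' = inner (\<nu> x) (\<nu> x')"

definition kbar :: "('x::finite \<Rightarrow> real \<Rightarrow> real) \<Rightarrow> ('x \<Rightarrow> 'v::real_inner) \<Rightarrow> 'x \<Rightarrow> real" where
  "kbar PXY \<nu> x = expX PXY (\<lambda>x'. kern \<nu> x' x)"

definition centered_kern :: "('x::finite \<Rightarrow> real \<Rightarrow> real) \<Rightarrow> ('x \<Rightarrow> 'v::real_inner) \<Rightarrow> 'x \<Rightarrow> 'x \<Rightarrow> real" where
  "centered_kern PXY \<nu> x x' =
     kern \<nu> x x' - kbar PXY \<nu> x - kbar PXY \<nu> x' + expX PXY (kbar PXY \<nu>)"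

definition tau :: "('x::finite \<Rightarrow> real \<Rightarrow> real) \<Rightarrow> ('x \<Rightarrow> 'v::real_inner) \<Rightarrow> ('x \<Rightarrow> real) \<Rightarrow> 'x \<Rightarrow> real" where
  "tau PXY \<nu> f x = expX PXY (\<lambda>x'. centered_kern PXY \<nu> x' x * f x')"

definition svm_obj :: "('x::finite \<Rightarrow> real \<Rightarrow> real) \<Rightarrow> ('x \<Rightarrow> 'v::real_inner) \<Rightarrow> real \<Rightarrow> 'v \<Rightarrow> real \<Rightarrow> real" where
  "svm_obj PXY \<nu> lam w b =
     expXY PXY (\<lambda>x y. max 0 (1 - y * (inner w (\<nu> x) + b))) + lam / 2 * (norm w)\<^sup>2"

definition svm_minimizer :: "('x::finite \<Rightarrow> real \<Rightarrow> real) \<Rightarrow> ('x \<Rightarrow> 'v::real_inner) \<Rightarrow> real \<Rightarrow> 'v \<Rightarrow> real \<Rightarrow> bool" where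
  "svm_minimizer PXY \<nu> lam w b \<longleftrightarrow> (\<forall>w' b'. svm_obj PXY \<nu> lam w b \<le> svm_obj PXY \<nu> lam w' b')"

definition cond_exp_given_Y :: "('x::finite \<Rightarrow> real \<Rightarrow> real) \<Rightarrow> ('x \<Rightarrow> real) \<Rightarrow> real \<Rightarrow> real" where
  "cond_exp_given_Y PXY h y = (\<Sum>x\<in>UNIV. PXY x y / marg_Y PXY y * h x)"

definition kernel_posterior :: "('x::finite \<Rightarrow> real \<Rightarrow> real) \<Rightarrow> ('x \<Rightarrow> 'v::real_inner) \<Rightarrow> real \<Rightarrow> 'x \<Rightarrow> real" where
  "kernel_posterior PXY \<nu> y x =
     marg_Y PXY y * (1 + cond_exp_given_Y PXY (\<lambda>x'. centered_kern PXY \<nu> x' x) y)"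

text \<open>arg max over y in {-1,1}; a tie is reported as 0 (same convention as sgn 0 = 0).\<close>
definition kernel_pred :: "('x::finite \<Rightarrow> real \<Rightarrow> real) \<Rightarrow> ('x \<Rightarrow> 'v::real_inner) \<Rightarrow> 'x \<Rightarrow> real" where
  "kernel_pred PXY \<nu> x =
     (if kernel_posterior PXY \<nu> 1 x > kernel_posterior PXY \<nu> (-1) x then 1
      else if kernel_posterior PXY \<nu> 1 x < kernel_posterior PXY \<nu> (-1) x then -1
      else 0)"

end

theory Submission
  imports Defs
begin

text \<open>For large \<lambda> the optimal SVM scores lie in [-1, 1], so the hinge is inactive and the
  objective becomes 1 - E[Y s(X)] + \<lambda>/2 \<parallel>w\<parallel>^2. With balanced labels the bias drops out of
  E[Y s(X)] = \<langle>w, E[Y \<nu>(X)]\<rangle>, so w = E[Y \<nu>(X)] / \<lambda> is optimal, and the factorization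
  of P_XY gives \<langle>E[Y \<nu>(X)], \<nu>(x)\<rangle> = \<rho> ([\<tau>(f*)](x) + const), the constant being absorbed
  into b. The same factorization yields P^(k)(y|x) = (1 + \<rho> y [\<tau>(f*)](x)) / 2, so both
  predictions are sgn [\<tau>(f*)](x).\<close>

lemma sum_labels: "(\<Sum>y\<in>labels. g y) = g (-1) + g (1::real)"
  by (simp add: labels_def)

lemma sum_marg_X: "is_joint_pmf PXY \<Longrightarrow> (\<Sum>x\<in>UNIV. marg_X PXY x) = 1"
  by (simp add: is_joint_pmf_def marg_X_def)

definition label_mean :: "('x::finite \<Rightarrow> real \<Rightarrow> real) \<Rightarrow> ('x \<Rightarrow> 'v::real_inner) \<Rightarrow> 'v" where
  "label_mean PXY \<nu> = (\<Sum>x\<in>UNIV. (PXY x 1 - PXY x (-1)) *\<^sub>R \<nu> x)"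

lemma expXY_one_minus_label_score:
  assumes "is_joint_pmf PXY"
  shows "expXY PXY (\<lambda>x y. 1 - y * s x) = 1 - (\<Sum>x\<in>UNIV. (PXY x 1 - PXY x (-1)) * s x)"
proof -
  have "expXY PXY (\<lambda>x y. 1 - y * s x)
      = (\<Sum>x\<in>UNIV. marg_X PXY x - (PXY x 1 - PXY x (-1)) * s x)"
    unfolding expXY_def marg_X_def by (simp add: sum_labels algebra_simps)
  then show ?thesis
    using sum_marg_X[OF assms] by (simp add: sum_subtractf)
qed

lemma expXY_hinge_ge_linear:
  assumes "is_joint_pmf PXY"
  shows "expXY PXY (\<lambda>x y. 1 - y * s x) \<le> expXY PXY (\<lambda>x y. max 0 (1 - y * s x))"
  using assms unfolding expXY_def is_joint_pmf_def
  by (intro sum_mono mult_left_mono) auto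

lemma expXY_hinge_eq_linear:
  assumes "\<And>x. \<bar>s x\<bar> \<le> 1"
  shows "expXY PXY (\<lambda>x y. max 0 (1 - y * s x)) = expXY PXY (\<lambda>x y. 1 - y * s x)"
  unfolding expXY_def
proof (intro sum.cong refl)
  fix x and y :: real
  assume "y \<in> labels"
  then have "max 0 (1 - y * s x) = 1 - y * s x"
    using assms[of x] by (auto simp: labels_def abs_le_iff)
  then show "PXY x y * max 0 (1 - y * s x) = PXY x y * (1 - y * s x)"
    by simp
qed

lemma label_weighted_affine_score:
  assumes "marg_Y PXY (-1) = marg_Y PXY 1"
  shows "(\<Sum>x\<in>UNIV. (PXY x 1 - PXY x (-1)) * (inner w (\<nu> x) + b)) = inner w (label_mean PXY \<nu>)"
proof -
  have "(\<Sum>x\<in>UNIV. PXY x 1 - PXY x (-1)) = 0"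
    using assms by (simp add: marg_Y_def sum_subtractf)
  then have "(\<Sum>x\<in>UNIV. (PXY x 1 - PXY x (-1)) * (inner w (\<nu> x) + b))
      = (\<Sum>x\<in>UNIV. (PXY x 1 - PXY x (-1)) * inner w (\<nu> x))"
    by (simp add: distrib_left sum.distrib flip: sum_distrib_right)
  then show ?thesis
    unfolding label_mean_def by (simp add: inner_sum_right)
qed

lemma inner_le_Young:
  fixes w m :: "'v::real_inner"
  assumes "lam > 0"
  shows "inner w m \<le> lam / 2 * (norm w)\<^sup>2 + (norm m)\<^sup>2 / (2 * lam)"
proof -
  have "0 \<le> (norm (lam *\<^sub>R w - m))\<^sup>2"
    by simp
  also have "\<dots> = lam\<^sup>2 * (norm w)\<^sup>2 - 2 * lam * inner w m + (norm m)\<^sup>2"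
    unfolding power2_norm_eq_inner
    by (simp add: inner_diff_left inner_diff_right inner_commute power2_eq_square algebra_simps)
  finally show ?thesis
    using assms by (simp add: field_simps power2_eq_square)
qed

lemma svm_obj_lower_bound:
  assumes "is_joint_pmf PXY" "marg_Y PXY (-1) = marg_Y PXY 1" "lam > 0"
  shows "1 - (norm (label_mean PXY \<nu>))\<^sup>2 / (2 * lam) \<le> svm_obj PXY \<nu> lam w b"
proof -
  have "1 - inner w (label_mean PXY \<nu>)
      \<le> expXY PXY (\<lambda>x y. max 0 (1 - y * (inner w (\<nu> x) + b)))"
    using expXY_hinge_ge_linear[OF assms(1), of "\<lambda>x. inner w (\<nu> x) + b"]
    by (simp add: expXY_one_minus_label_score[OF assms(1)] label_weighted_affine_score[OF assms(2)])
  then show ?thesis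
    using inner_le_Young[OF assms(3), of w "label_mean PXY \<nu>"]
    unfolding svm_obj_def by linarith
qed

lemma scaled_affine_score:
  fixes m v :: "'v::real_inner"
  shows "inner ((1 / lam) *\<^sub>R m) v + - c / lam = (inner m v - c) / lam"
  by (simp add: diff_divide_distrib)

lemma svm_obj_at_scaled_label_mean:
  assumes "is_joint_pmf PXY" "marg_Y PXY (-1) = marg_Y PXY 1" "lam > 0"
    and "\<And>x. \<bar>inner (label_mean PXY \<nu>) (\<nu> x) - c\<bar> \<le> lam"
  shows "svm_obj PXY \<nu> lam ((1 / lam) *\<^sub>R label_mean PXY \<nu>) (- c / lam)
       = 1 - (norm (label_mean PXY \<nu>))\<^sup>2 / (2 * lam)"
proof -
  let ?m = "label_mean PXY \<nu>"
  define s where "s x = inner ((1 / lam) *\<^sub>R ?m) (\<nu> x) + - c / lam" for x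
  have "s x = (inner ?m (\<nu> x) - c) / lam" for x
    unfolding s_def by (rule scaled_affine_score)
  then have "\<bar>s x\<bar> \<le> 1" for x
    using assms(3) assms(4)[of x] by (simp add: abs_divide divide_le_eq_1)
  then have "expXY PXY (\<lambda>x y. max 0 (1 - y * s x)) = 1 - (norm ?m)\<^sup>2 / lam"
    using expXY_one_minus_label_score[OF assms(1), of s]
      label_weighted_affine_score[OF assms(2), of "(1 / lam) *\<^sub>R ?m" \<nu> "- c / lam"]
    by (simp add: expXY_hinge_eq_linear s_def power2_norm_eq_inner)
  moreover have "lam / 2 * (norm ((1 / lam) *\<^sub>R ?m))\<^sup>2 = (norm ?m)\<^sup>2 / (2 * lam)"
    using assms(3) by (simp add: power2_eq_square)
  ultimately show ?thesis
    unfolding svm_obj_def s_def by simp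
qed

lemma svm_minimizer_scaled_label_mean:
  assumes "is_joint_pmf PXY" "marg_Y PXY (-1) = marg_Y PXY 1" "lam > 0"
    and "\<And>x. \<bar>inner (label_mean PXY \<nu>) (\<nu> x) - c\<bar> \<le> lam"
  shows "svm_minimizer PXY \<nu> lam ((1 / lam) *\<^sub>R label_mean PXY \<nu>) (- c / lam)"
  unfolding svm_minimizer_def svm_obj_at_scaled_label_mean[OF assms]
  using svm_obj_lower_bound[OF assms(1-3)] by blast

lemma svm_sign_for_large_lambda:
  assumes "is_joint_pmf PXY" "marg_Y PXY (-1) = marg_Y PXY 1"
  shows "\<exists>lamT > 0. \<forall>lam \<ge> lamT. \<exists>w b. svm_minimizer PXY \<nu> lam w b \<and>
           (\<forall>x. sgn (inner w (\<nu> x) + b) = sgn (inner (label_mean PXY \<nu>) (\<nu> x) - c))"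
proof -
  let ?m = "label_mean PXY \<nu>"
  define lamT where "lamT = 1 + (\<Sum>x\<in>UNIV. \<bar>inner ?m (\<nu> x) - c\<bar>)"
  have "lamT > 0"
    by (simp add: lamT_def add_pos_nonneg sum_nonneg)
  moreover have "svm_minimizer PXY \<nu> lam ((1 / lam) *\<^sub>R ?m) (- c / lam) \<and>
      (\<forall>x. sgn (inner ((1 / lam) *\<^sub>R ?m) (\<nu> x) + - c / lam) = sgn (inner ?m (\<nu> x) - c))"
    if "lam \<ge> lamT" for lam
  proof
    have "lam > 0"
      using \<open>lamT > 0\<close> that by simp
    have "\<bar>inner ?m (\<nu> x) - c\<bar> \<le> lam" for x
      using member_le_sum[of x UNIV "\<lambda>x. \<bar>inner ?m (\<nu> x) - c\<bar>"] that by (simp add: lamT_def)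
    then show "svm_minimizer PXY \<nu> lam ((1 / lam) *\<^sub>R ?m) (- c / lam)"
      by (rule svm_minimizer_scaled_label_mean[OF assms \<open>lam > 0\<close>])
    show "\<forall>x. sgn (inner ((1 / lam) *\<^sub>R ?m) (\<nu> x) + - c / lam) = sgn (inner ?m (\<nu> x) - c)"
      unfolding scaled_affine_score using \<open>lam > 0\<close> by (simp add: sgn_divide)
  qed
  ultimately show ?thesis
    by blast
qed

lemma centered_kern_eq:
  "centered_kern PXY \<nu> x' x = kern \<nu> x' x - kbar PXY \<nu> x' + (expX PXY (kbar PXY \<nu>) - kbar PXY \<nu> x)"
  by (simp add: centered_kern_def)

lemma tau_of_mean_zero:
  assumes "expX PXY g = 0"
  shows "tau PXY \<nu> g x
       = expX PXY (\<lambda>x'. kern \<nu> x' x * g x') - expX PXY (\<lambda>x'. kbar PXY \<nu> x' * g x')"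
proof -
  define d where "d = expX PXY (kbar PXY \<nu>) - kbar PXY \<nu> x"
  have "tau PXY \<nu> g x = expX PXY (\<lambda>x'. (kern \<nu> x' x - kbar PXY \<nu> x' + d) * g x')"
    by (simp add: tau_def centered_kern_eq d_def)
  also have "\<dots> = expX PXY (\<lambda>x'. kern \<nu> x' x * g x') - expX PXY (\<lambda>x'. kbar PXY \<nu> x' * g x')
      + d * expX PXY g"
    unfolding expX_def by (simp add: algebra_simps sum.distrib sum_subtractf sum_distrib_left)
  finally show ?thesis
    using assms by simp
qed

lemma expX_centered_kern:
  assumes "is_joint_pmf PXY"
  shows "expX PXY (\<lambda>x'. centered_kern PXY \<nu> x' x) = 0"
proof -
  define d where "d = expX PXY (kbar PXY \<nu>) - kbar PXY \<nu> x"
  have "expX PXY (\<lambda>x'. centered_kern PXY \<nu> x' x) = expX PXY (\<lambda>x'. kern \<nu> x' x - kbar PXY \<nu> x' + d)"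
    by (simp add: centered_kern_eq d_def)
  also have "\<dots> = expX PXY (\<lambda>x'. kern \<nu> x' x) - expX PXY (kbar PXY \<nu>)
      + d * (\<Sum>x'\<in>UNIV. marg_X PXY x')"
    unfolding expX_def
    by (simp add: algebra_simps sum.distrib sum_subtractf sum_distrib_left)
  finally show ?thesis
    by (simp add: sum_marg_X[OF assms] d_def kbar_def)
qed

definition modal_decomposition :: "('x::finite \<Rightarrow> real \<Rightarrow> real) \<Rightarrow> real \<Rightarrow> ('x \<Rightarrow> real) \<Rightarrow> bool" where
  "modal_decomposition PXY \<rho> f \<longleftrightarrow>
     (\<forall>x. \<forall>y\<in>labels. PXY x y = marg_X PXY x * marg_Y PXY y * (1 + \<rho> * f x * y))"

lemma label_difference_decomposed:
  assumes "modal_decomposition PXY \<rho> f" "marg_Y PXY (-1) = 1/2" "marg_Y PXY 1 = 1/2"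
  shows "PXY x 1 - PXY x (-1) = \<rho> * marg_X PXY x * f x"
proof -
  have "PXY x 1 = marg_X PXY x * marg_Y PXY 1 * (1 + \<rho> * f x * 1)"
    and "PXY x (-1) = marg_X PXY x * marg_Y PXY (-1) * (1 + \<rho> * f x * -1)"
    using assms(1) unfolding modal_decomposition_def labels_def by blast+
  then show ?thesis
    using assms(2,3) by (simp add: algebra_simps)
qed

lemma inner_label_mean_decomposed:
  assumes "modal_decomposition PXY \<rho> f" "marg_Y PXY (-1) = 1/2" "marg_Y PXY 1 = 1/2"
    and "expX PXY f = 0"
  shows "inner (label_mean PXY \<nu>) (\<nu> x)
       = \<rho> * (tau PXY \<nu> f x + expX PXY (\<lambda>x'. kbar PXY \<nu> x' * f x'))"
proof -
  have "inner (label_mean PXY \<nu>) (\<nu> x) = \<rho> * expX PXY (\<lambda>x'. kern \<nu> x' x * f x')"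
    unfolding label_mean_def expX_def
    by (simp add: label_difference_decomposed[OF assms(1-3)] inner_sum_left kern_def
        sum_distrib_left algebra_simps)
  then show ?thesis
    by (simp add: tau_of_mean_zero[OF assms(4)])
qed

lemma cond_exp_given_Y_decomposed:
  assumes "modal_decomposition PXY \<rho> f" "y \<in> labels" "marg_Y PXY y \<noteq> 0"
  shows "cond_exp_given_Y PXY h y = expX PXY h + \<rho> * y * expX PXY (\<lambda>x. f x * h x)"
proof -
  have "PXY x y / marg_Y PXY y = marg_X PXY x * (1 + \<rho> * f x * y)" for x
    using assms by (simp add: modal_decomposition_def)
  then show ?thesis
    unfolding cond_exp_given_Y_def expX_def by (simp add: algebra_simps sum.distrib sum_distrib_left)
qed

lemma kernel_posterior_decomposed:
  assumes "is_joint_pmf PXY" "modal_decomposition PXY \<rho> f" "y \<in> labels" "marg_Y PXY y \<noteq> 0"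
  shows "kernel_posterior PXY \<nu> y x = marg_Y PXY y * (1 + \<rho> * y * tau PXY \<nu> f x)"
  unfolding kernel_posterior_def cond_exp_given_Y_decomposed[OF assms(2-4)] tau_def
  by (simp add: expX_centered_kern[OF assms(1)] mult.commute)

lemma kernel_pred_decomposed:
  assumes "is_joint_pmf PXY" "modal_decomposition PXY \<rho> f"
    and "marg_Y PXY (-1) = marg_Y PXY 1" "marg_Y PXY 1 > 0" "\<rho> > 0"
  shows "kernel_pred PXY \<nu> x = sgn (tau PXY \<nu> f x)"
proof -
  have "kernel_posterior PXY \<nu> y x = marg_Y PXY 1 * (1 + \<rho> * y * tau PXY \<nu> f x)"
    if "y \<in> labels" for y
    using kernel_posterior_decomposed[OF assms(1,2) that] that assms(3,4)
    by (auto simp: labels_def)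
  then show ?thesis
    unfolding kernel_pred_def using assms(4,5)
    by (simp add: labels_def sgn_if mult_less_cancel_left_pos zero_less_mult_iff mult_less_0_iff)
qed

theorem theorem2:
  fixes PXY :: "'x::finite \<Rightarrow> real \<Rightarrow> real"
    and \<nu> :: "'x \<Rightarrow> 'v::real_inner"
    and \<rho> :: real and fstar :: "'x \<Rightarrow> real"
  assumes joint: "is_joint_pmf PXY"
    and balanced: "marg_Y PXY (-1) = 1/2" "marg_Y PXY 1 = 1/2"
    and rho_hgr: "\<rho> = hgr PXY"
    and rho_pos: "\<rho> > 0"
    and fstar_mean: "expX PXY fstar = 0"
    and fstar_norm: "expX PXY (\<lambda>x. (fstar x)\<^sup>2) = 1"
    and fstar_maxcorr: "expXY PXY (\<lambda>x y. fstar x * y) = \<rho>"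
    and factor: "\<And>x y. y \<in> labels \<Longrightarrow>
                   PXY x y = marg_X PXY x * marg_Y PXY y * (1 + \<rho> * fstar x * y)"
  shows "\<exists>lamT > 0. \<forall>lam \<ge> lamT. \<exists>w b. svm_minimizer PXY \<nu> lam w b \<and>
           (\<forall>x. sgn (inner w (\<nu> x) + b) = sgn (tau PXY \<nu> fstar x)) \<and>
           (\<forall>x. sgn (inner w (\<nu> x) + b) = kernel_pred PXY \<nu> x)"
proof -
  define c where "c = \<rho> * expX PXY (\<lambda>x'. kbar PXY \<nu> x' * fstar x')"
  have decomposed: "modal_decomposition PXY \<rho> fstar"
    using factor by (simp add: modal_decomposition_def)
  have "inner (label_mean PXY \<nu>) (\<nu> x) - c = \<rho> * tau PXY \<nu> fstar x" for x
    using inner_label_mean_decomposed[OF decomposed balanced fstar_mean]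
    by (simp add: c_def algebra_simps)
  then have "sgn (inner (label_mean PXY \<nu>) (\<nu> x) - c) = sgn (tau PXY \<nu> fstar x)" for x
    using rho_pos by (simp add: sgn_mult)
  moreover have "kernel_pred PXY \<nu> x = sgn (tau PXY \<nu> fstar x)" for x
    using kernel_pred_decomposed[OF joint decomposed _ _ rho_pos] balanced by simp
  moreover have "\<exists>lamT > 0. \<forall>lam \<ge> lamT. \<exists>w b. svm_minimizer PXY \<nu> lam w b \<and>
      (\<forall>x. sgn (inner w (\<nu> x) + b) = sgn (inner (label_mean PXY \<nu>) (\<nu> x) - c))"
    using balanced by (intro svm_sign_for_large_lambda joint) simp
  ultimately show ?thesis
    by simp
qed

end
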